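(* Let $G$ be a connected graph with $n$ vertices and maximum degree $\Delta$, and let $L$ be a list-assignment with $|L(v)|\ge\deg(v)+1$ for all $v\in V(G)$. Let $\mathcal{C}(G,L)^f$ denote the set of frozen $L$-colourings of $G$ and $\mathcal{C}(G,L)$ the set of all $L$-colourings of $G$. Unless $G$ is a complete graph, \[\frac{|\mathcal{C}(G,L)^f|}{|\mathcal{C}(G,L)|}\le 2^{-n/\Delta^4}.\]
   Context: An $L$-colouring is a proper colouring $\varphi$ with $\varphi(v)\in L(v)$ for all $v$. A vertex $v$ is frozen under $\varphi$ if every colour of $L(v)\setminus\{\varphi(v)\}$ appears on a neighbour of $v$; an $L$-colouring is frozen if all its vertices are frozen. *)

theory Defs
  imports Complex_Main
begin

definition graph :: "'a set \<Rightarrow> ('a \<Rightarrow> 'a \<Rightarrow> bool) \<Rightarrow> bool" where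
  "graph V E \<longleftrightarrow> finite V \<and> (\<forall>u v. E u v \<longrightarrow> E v u) \<and> (\<forall>v. \<not> E v v)
     \<and> (\<forall>u v. E u v \<longrightarrow> u \<in> V \<and> v \<in> V)"

definition neighbours :: "'a set \<Rightarrow> ('a \<Rightarrow> 'a \<Rightarrow> bool) \<Rightarrow> 'a \<Rightarrow> 'a set" where
  "neighbours V E v = {u \<in> V. E v u}"

definition degree :: "'a set \<Rightarrow> ('a \<Rightarrow> 'a \<Rightarrow> bool) \<Rightarrow> 'a \<Rightarrow> nat" where
  "degree V E v = card (neighbours V E v)"

definition max_degree :: "'a set \<Rightarrow> ('a \<Rightarrow> 'a \<Rightarrow> bool) \<Rightarrow> nat" where
  "max_degree V E = Max (insert 0 (degree V E ` V))"

definition connected_graph :: "'a set \<Rightarrow> ('a \<Rightarrow> 'a \<Rightarrow> bool) \<Rightarrow> bool" where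
  "connected_graph V E \<longleftrightarrow> V \<noteq> {} \<and>
     (\<forall>u\<in>V. \<forall>v\<in>V. (u, v) \<in> {(x, y). x \<in> V \<and> y \<in> V \<and> E x y}\<^sup>*)"

definition complete_graph :: "'a set \<Rightarrow> ('a \<Rightarrow> 'a \<Rightarrow> bool) \<Rightarrow> bool" where
  "complete_graph V E \<longleftrightarrow> (\<forall>u\<in>V. \<forall>v\<in>V. u \<noteq> v \<longrightarrow> E u v)"

text \<open>L-colourings; colourings are taken extensional (undefined outside V)
  so that the set of colourings is finite and counted faithfully.\<close>
definition L_colourings :: "'a set \<Rightarrow> ('a \<Rightarrow> 'a \<Rightarrow> bool) \<Rightarrow> ('a \<Rightarrow> 'c set) \<Rightarrow> ('a \<Rightarrow> 'c) set" where
  "L_colourings V E L = {\<phi>. (\<forall>v\<in>V. \<phi> v \<in> L v) \<and> (\<forall>u\<in>V. \<forall>v\<in>V. E u v \<longrightarrow> \<phi> u \<noteq> \<phi> v)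
      \<and> (\<forall>v. v \<notin> V \<longrightarrow> \<phi> v = undefined)}"

definition frozen_vertex :: "'a set \<Rightarrow> ('a \<Rightarrow> 'a \<Rightarrow> bool) \<Rightarrow> ('a \<Rightarrow> 'c set) \<Rightarrow> ('a \<Rightarrow> 'c) \<Rightarrow> 'a \<Rightarrow> bool" where
  "frozen_vertex V E L \<phi> v \<longleftrightarrow> (\<forall>c \<in> L v - {\<phi> v}. \<exists>u\<in>neighbours V E v. \<phi> u = c)"

definition frozen_L_colourings :: "'a set \<Rightarrow> ('a \<Rightarrow> 'a \<Rightarrow> bool) \<Rightarrow> ('a \<Rightarrow> 'c set) \<Rightarrow> ('a \<Rightarrow> 'c) set" where
  "frozen_L_colourings V E L = {\<phi> \<in> L_colourings V E L. \<forall>v\<in>V. frozen_vertex V E L \<phi> v}"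

end

theory Submission
  imports Defs "HOL-Library.FuncSet"
begin

text \<open>Under the list-size hypothesis, a frozen vertex v sees every colour of L v - {\<phi> v} on
  exactly one neighbour. Call s a P3-centre if it has two non-adjacent neighbours u s and w s.
  Swapping the colours of s and u s in a frozen colouring gives again an L-colouring, in which
  w s is no longer frozen because the colour of s has left its neighbourhood. For P3-centres at
  pairwise distance at least 4 the swaps can be made independently on every subset T of them,
  and T is read off the result as the set of centres whose witness w s is unfrozen; hence
  |F| 2^|S| \<le> |C|. In a connected non-complete graph every vertex equals or is adjacent to a
  P3-centre, so a maximal family S of far-apart P3-centres covers V by balls of radius 4, each of
  size at most \<Delta>^4, whence |S| \<ge> n / \<Delta>^4.\<close>

section \<open>Balls and far-apart vertices\<close>

primrec graph_ball :: "('a \<Rightarrow> 'a \<Rightarrow> bool) \<Rightarrow> 'a \<Rightarrow> nat \<Rightarrow> 'a set" where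
  "graph_ball E s 0 = {s}"
| "graph_ball E s (Suc r) = graph_ball E s r \<union> {y. \<exists>z\<in>graph_ball E s r. E z y}"

lemma graph_ball_step: "y \<in> graph_ball E s r \<Longrightarrow> z = y \<or> E y z \<Longrightarrow> z \<in> graph_ball E s (Suc r)"
  by auto

lemma centre_in_graph_ball: "s \<in> graph_ball E s r"
  by (induction r) auto

lemma graph_ball_mono_Suc: "graph_ball E s r \<subseteq> graph_ball E s (Suc r)"
  by auto

text \<open>Graph distance at least 4.\<close>

definition far_apart :: "('a \<Rightarrow> 'a \<Rightarrow> bool) \<Rightarrow> 'a \<Rightarrow> 'a \<Rightarrow> bool" where
  "far_apart E s t \<longleftrightarrow> (\<forall>a b. (a = s \<or> E s a) \<longrightarrow> (b = t \<or> E t b) \<longrightarrow> a \<noteq> b \<and> \<not> E a b)"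

definition p3_centre :: "('a \<Rightarrow> 'a \<Rightarrow> bool) \<Rightarrow> 'a \<Rightarrow> bool" where
  "p3_centre E m \<longleftrightarrow> (\<exists>a b. E m a \<and> E m b \<and> a \<noteq> b \<and> \<not> E a b)"

locale finite_graph =
  fixes V :: "'a set" and E :: "'a \<Rightarrow> 'a \<Rightarrow> bool"
  assumes graph: "graph V E"
begin

abbreviation "N \<equiv> neighbours V E"
abbreviation "\<Delta> \<equiv> max_degree V E"

lemma finite_V: "finite V"
  using graph by (simp add: graph_def)

lemma edge_sym: "E x y \<Longrightarrow> E y x"
  using graph by (simp add: graph_def)

lemma edge_irrefl: "\<not> E x x"
  using graph by (simp add: graph_def)

lemma edge_in_V: "E x y \<Longrightarrow> x \<in> V \<and> y \<in> V"
  using graph by (simp add: graph_def)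

lemma neighbours_iff: "y \<in> N x \<longleftrightarrow> E x y"
  using edge_in_V by (auto simp: neighbours_def)

lemma finite_neighbours: "finite (N x)"
  using finite_V by (simp add: neighbours_def)

lemma card_neighbours_le_max_degree: "v \<in> V \<Longrightarrow> card (N v) \<le> \<Delta>"
  using finite_V by (auto simp: max_degree_def degree_def intro: Max_ge)

lemma finite_graph_ball: "finite (graph_ball E s r)"
proof -
  have "graph_ball E s r \<subseteq> insert s V"
    by (induction r) (auto dest: edge_in_V)
  then show ?thesis
    using finite_V finite_subset by blast
qed

lemma card_graph_ball_Suc:
  "card (graph_ball E s (Suc r)) = card (graph_ball E s r) + card (graph_ball E s (Suc r) - graph_ball E s r)"
  by (metis card_Diff_subset card_mono finite_graph_ball graph_ball_mono_Suc le_add_diff_inverse)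

lemma card_sphere_Suc_le:
  "card (graph_ball E s (Suc (Suc r)) - graph_ball E s (Suc r))
     \<le> (\<Delta> - 1) * card (graph_ball E s (Suc r) - graph_ball E s r)"
proof -
  let ?B = "graph_ball E s (Suc r)"
  let ?D = "?B - graph_ball E s r"
  have "graph_ball E s (Suc (Suc r)) - ?B \<subseteq> (\<Union>z\<in>?D. N z - ?B)"
  proof
    fix x assume x: "x \<in> graph_ball E s (Suc (Suc r)) - ?B"
    then obtain z where z: "z \<in> ?B" "E z x"
      unfolding graph_ball.simps(2)[of E s "Suc r"] by blast
    moreover have "z \<notin> graph_ball E s r"
      using graph_ball_step[of z E s r x] x z by blast
    ultimately show "x \<in> (\<Union>z\<in>?D. N z - ?B)"
      using x neighbours_iff by blast
  qed
  then have "card (graph_ball E s (Suc (Suc r)) - ?B) \<le> card (\<Union>z\<in>?D. N z - ?B)"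
    by (rule card_mono[rotated]) (intro finite_UN_I finite_Diff finite_graph_ball finite_neighbours)
  also have "\<dots> \<le> (\<Sum>z\<in>?D. card (N z - ?B))"
    by (intro card_UN_le finite_Diff finite_graph_ball)
  also have "\<dots> \<le> (\<Sum>z\<in>?D. \<Delta> - 1)"
  proof (rule sum_mono)
    fix z assume z: "z \<in> ?D"
    then obtain y where y: "y \<in> graph_ball E s r" "E y z"
      unfolding graph_ball.simps(2)[of E s r] by blast
    then have "N z - ?B \<subseteq> N z - {y}"
      using graph_ball_mono_Suc[of E s r] by blast
    then have "card (N z - ?B) \<le> card (N z) - 1"
      using y(2) card_mono[OF _ \<open>N z - ?B \<subseteq> N z - {y}\<close>]
      by (simp add: finite_neighbours neighbours_iff edge_sym)
    moreover have "card (N z) \<le> \<Delta>"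
      using y(2) edge_in_V card_neighbours_le_max_degree by blast
    ultimately show "card (N z - ?B) \<le> \<Delta> - 1" by linarith
  qed
  also have "\<dots> = (\<Delta> - 1) * card ?D"
    by (simp only: sum_constant of_nat_id mult.commute)
  finally show ?thesis .
qed

lemma card_sphere_le:
  assumes "s \<in> V"
  shows "card (graph_ball E s (Suc r) - graph_ball E s r) \<le> \<Delta> * (\<Delta> - 1) ^ r"
proof (induction r)
  case 0
  have "graph_ball E s 1 - graph_ball E s 0 \<subseteq> N s"
    by (auto simp: neighbours_iff)
  then have "card (graph_ball E s 1 - graph_ball E s 0) \<le> card (N s)"
    by (intro card_mono finite_neighbours)
  then show ?case
    using card_neighbours_le_max_degree[OF assms] by simp
next
  case (Suc r)
  have "card (graph_ball E s (Suc (Suc r)) - graph_ball E s (Suc r))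
      \<le> (\<Delta> - 1) * card (graph_ball E s (Suc r) - graph_ball E s r)"
    by (rule card_sphere_Suc_le)
  also have "\<dots> \<le> (\<Delta> - 1) * (\<Delta> * (\<Delta> - 1) ^ r)"
    using Suc.IH by (rule mult_le_mono2)
  finally show ?case
    by (simp only: power_Suc mult.left_commute)
qed

lemma card_graph_ball_le:
  assumes "s \<in> V"
  shows "card (graph_ball E s r) \<le> 1 + (\<Sum>i<r. \<Delta> * (\<Delta> - 1) ^ i)"
proof (induction r)
  case (Suc r)
  then show ?case
    using card_graph_ball_Suc[of s r] card_sphere_le[OF assms, of r] by simp
qed simp

lemma card_graph_ball_4_le:
  assumes "s \<in> V" and "\<Delta> \<ge> 2"
  shows "card (graph_ball E s 4) \<le> \<Delta> ^ 4"
proof -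
  obtain e where e: "\<Delta> = e + 2"
    using assms(2) by (metis add.commute le_add_diff_inverse)
  have "1 + (\<Sum>i<4. \<Delta> * (\<Delta> - 1) ^ i) \<le> \<Delta> ^ 4"
    by (simp add: e numeral_eq_Suc algebra_simps)
  then show ?thesis
    using card_graph_ball_le[OF assms(1), of 4] by linarith
qed

lemma not_far_apart_imp_in_graph_ball:
  assumes "\<not> far_apart E s t"
  shows "t \<in> graph_ball E s 3"
proof -
  obtain a b where "a = s \<or> E s a" "b = t \<or> E t b" "a = b \<or> E a b"
    using assms unfolding far_apart_def by blast
  then show ?thesis
    using graph_ball_step[of _ E s] centre_in_graph_ball[of s E 0] edge_sym
    by (metis numeral_3_eq_3)
qed

lemma far_apart_commute: "far_apart E s t \<longleftrightarrow> far_apart E t s"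
  unfolding far_apart_def using edge_sym by blast

section \<open>A covering family of far-apart P3-centres\<close>

lemma exists_p3_centre_nearby:
  assumes conn: "connected_graph V E" and noncomplete: "\<not> complete_graph V E" and x: "x \<in> V"
  obtains m where "m \<in> V" "p3_centre E m" "m = x \<or> E x m"
proof (cases "p3_centre E x")
  case True
  then show ?thesis using that x by blast
next
  case False
  \<comment> \<open>The closed neighbourhood of x is a clique, so a path from x to a vertex outside it leaves
    it along an edge y y', and then y is a P3-centre.\<close>
  define Nx where "Nx = {y. y = x \<or> E x y}"
  have clique: "E a b" if "a \<in> Nx" "b \<in> Nx" "a \<noteq> b" for a b
    using False that edge_sym unfolding Nx_def p3_centre_def by blast
  obtain z where z: "z \<in> V" "z \<notin> Nx"
    using noncomplete clique unfolding complete_graph_def by blast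
  let ?R = "{(x, y). x \<in> V \<and> y \<in> V \<and> E x y}"
  have "z' \<in> Nx \<or> (\<exists>y y'. y \<in> Nx \<and> y' \<notin> Nx \<and> E y y')" if "(x, z') \<in> ?R\<^sup>*" for z'
    using that by (induction rule: rtrancl_induct) (auto simp: Nx_def)
  then obtain y y' where y: "y \<in> Nx" "y' \<notin> Nx" "E y y'"
    using conn x z unfolding connected_graph_def by blast
  then have "E x y" "y \<in> V"
    using edge_in_V unfolding Nx_def by blast+
  moreover have "p3_centre E y"
    using y \<open>E x y\<close> edge_sym unfolding Nx_def p3_centre_def by blast
  ultimately show ?thesis using that by blast
qed

lemma max_degree_ge_2:
  assumes "m \<in> V" "p3_centre E m"
  shows "\<Delta> \<ge> 2"
proof -
  obtain a b where "a \<in> N m" "b \<in> N m" "a \<noteq> b"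
    using assms(2) unfolding p3_centre_def neighbours_iff by blast
  then have "card {a, b} \<le> card (N m)"
    by (intro card_mono finite_neighbours) auto
  then show ?thesis
    using card_neighbours_le_max_degree[OF assms(1)] \<open>a \<noteq> b\<close> by simp
qed

lemma exists_far_apart_p3_centres:
  assumes conn: "connected_graph V E" and noncomplete: "\<not> complete_graph V E"
  obtains S where "S \<subseteq> V" "\<forall>s\<in>S. p3_centre E s"
    "\<forall>s\<in>S. \<forall>t\<in>S. s \<noteq> t \<longrightarrow> far_apart E s t" "card V \<le> card S * \<Delta> ^ 4"
proof -
  define M where "M = {m \<in> V. p3_centre E m}"
  define P where "P = {S. S \<subseteq> M \<and> (\<forall>s\<in>S. \<forall>t\<in>S. s \<noteq> t \<longrightarrow> far_apart E s t)}"
  have "finite P"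
    using finite_V by (auto simp: P_def M_def intro: finite_subset[of _ "Pow V"])
  moreover have "{} \<in> P" by (simp add: P_def)
  ultimately obtain S where "S \<in> P" and maximal: "\<And>S'. S' \<in> P \<Longrightarrow> S \<subseteq> S' \<Longrightarrow> S = S'"
    using finite_has_maximal by (metis empty_iff)
  then have SM: "S \<subseteq> M" and far: "\<forall>s\<in>S. \<forall>t\<in>S. s \<noteq> t \<longrightarrow> far_apart E s t"
    by (auto simp: P_def)
  have SV: "S \<subseteq> V" using SM by (auto simp: M_def)
  have near_S: "\<exists>s\<in>S. m \<in> graph_ball E s 3" if m: "m \<in> M" for m
  proof (cases "m \<in> S")
    case True
    then show ?thesis using centre_in_graph_ball[of m E 3] by blast
  next
    case False
    then have "insert m S \<notin> P" using maximal by blast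
    then obtain s where "s \<in> S" "\<not> far_apart E s m"
      using SM m far far_apart_commute unfolding P_def by blast
    then show ?thesis using not_far_apart_imp_in_graph_ball by blast
  qed
  have cover: "V \<subseteq> (\<Union>s\<in>S. graph_ball E s 4)"
  proof
    fix x assume x: "x \<in> V"
    obtain m where m: "m \<in> V" "p3_centre E m" "m = x \<or> E x m"
      by (rule exists_p3_centre_nearby[OF conn noncomplete x])
    then obtain s where s: "s \<in> S" "m \<in> graph_ball E s 3"
      using near_S by (auto simp: M_def)
    have "x = m \<or> E m x"
      using m(3) edge_sym by blast
    then have "x \<in> graph_ball E s (Suc 3)"
      using graph_ball_step[OF s(2)] by blast
    then have "x \<in> graph_ball E s 4"
      by (simp del: graph_ball.simps)
    then show "x \<in> (\<Union>s\<in>S. graph_ball E s 4)"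
      using s(1) by blast
  qed
  obtain m where "m \<in> V" "p3_centre E m"
    using conn exists_p3_centre_nearby[OF conn noncomplete] unfolding connected_graph_def by blast
  then have "\<Delta> \<ge> 2" by (rule max_degree_ge_2)
  have "card V \<le> card (\<Union>s\<in>S. graph_ball E s 4)"
    using cover finite_V SV by (intro card_mono) (auto intro: finite_subset finite_graph_ball)
  also have "\<dots> \<le> (\<Sum>s\<in>S. card (graph_ball E s 4))"
    by (rule card_UN_le) (meson SV finite_V finite_subset)
  also have "\<dots> \<le> (\<Sum>s\<in>S. \<Delta> ^ 4)"
    using card_graph_ball_4_le \<open>\<Delta> \<ge> 2\<close> SV by (intro sum_mono) blast
  also have "\<dots> = card S * \<Delta> ^ 4"
    by simp
  finally show ?thesis
    using that SV SM far by (auto simp: M_def)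
qed

end

section \<open>Frozen colourings\<close>

locale list_assignment = finite_graph +
  fixes L :: "'a \<Rightarrow> 'c set"
  assumes list_size: "\<And>v. v \<in> V \<Longrightarrow> finite (L v) \<and> card (L v) \<ge> degree V E v + 1"
begin

abbreviation "C \<equiv> L_colourings V E L"
abbreviation "F \<equiv> frozen_L_colourings V E L"

lemma finite_L_colourings: "finite C"
proof (rule finite_subset)
  show "C \<subseteq> Pi\<^sub>E V L"
    by (auto simp: L_colourings_def PiE_def Pi_def extensional_def)
  show "finite (Pi\<^sub>E V L)"
    using finite_PiE finite_V list_size by blast
qed

lemma frozen_imp_L_colouring: "\<phi> \<in> F \<Longrightarrow> \<phi> \<in> C"
  by (simp add: frozen_L_colourings_def)

lemma L_colouring_proper: "\<phi> \<in> C \<Longrightarrow> E x y \<Longrightarrow> \<phi> x \<noteq> \<phi> y"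
  using edge_in_V by (auto simp: L_colourings_def)

lemma frozen_vertex_neighbours:
  assumes "\<phi> \<in> C" "v \<in> V" "frozen_vertex V E L \<phi> v"
  shows "inj_on \<phi> (N v)" "\<phi> ` N v = L v - {\<phi> v}"
proof -
  have sub: "L v - {\<phi> v} \<subseteq> \<phi> ` N v"
    using assms(3) unfolding frozen_vertex_def by (metis image_eqI subsetI)
  have "\<phi> v \<in> L v"
    using assms(1,2) by (simp add: L_colourings_def)
  then have "card (L v - {\<phi> v}) \<ge> card (N v)"
    using list_size[OF assms(2)] by (auto simp: degree_def)
  moreover have "card (L v - {\<phi> v}) \<le> card (\<phi> ` N v)"
    by (intro card_mono sub) (simp add: finite_neighbours)
  moreover have "card (\<phi> ` N v) \<le> card (N v)"
    by (rule card_image_le[OF finite_neighbours])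
  ultimately have "card (\<phi> ` N v) = card (N v)" "card (L v - {\<phi> v}) = card (\<phi> ` N v)"
    by linarith+
  then show "inj_on \<phi> (N v)" "\<phi> ` N v = L v - {\<phi> v}"
    using eq_card_imp_inj_on[OF finite_neighbours] card_subset_eq[OF _ sub]
    by (auto simp: finite_neighbours)
qed

lemma frozen_colouring_inj_on_neighbours: "\<phi> \<in> F \<Longrightarrow> v \<in> V \<Longrightarrow> inj_on \<phi> (N v)"
  using frozen_vertex_neighbours(1) by (auto simp: frozen_L_colourings_def)

lemma frozen_colouring_image_neighbours: "\<phi> \<in> F \<Longrightarrow> v \<in> V \<Longrightarrow> \<phi> ` N v = L v - {\<phi> v}"
  using frozen_vertex_neighbours(2) by (auto simp: frozen_L_colourings_def)

lemma frozen_colouring_neighbour_in_list: "\<phi> \<in> F \<Longrightarrow> E v x \<Longrightarrow> \<phi> x \<in> L v"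
  using frozen_colouring_image_neighbours[of \<phi> v] edge_in_V neighbours_iff by blast

end

section \<open>Swapping colours on far-apart gadgets\<close>

locale far_apart_gadgets = list_assignment +
  fixes S :: "'a set" and u w :: "'a \<Rightarrow> 'a"
  assumes gadgets_in_V: "S \<subseteq> V"
    and gadget: "\<And>s. s \<in> S \<Longrightarrow> E s (u s) \<and> E s (w s) \<and> u s \<noteq> w s \<and> \<not> E (u s) (w s)"
    and gadgets_far_apart: "\<And>s t. s \<in> S \<Longrightarrow> t \<in> S \<Longrightarrow> s \<noteq> t \<Longrightarrow> far_apart E s t"
begin

lemma far_apartD:
  "s \<in> S \<Longrightarrow> t \<in> S \<Longrightarrow> s \<noteq> t \<Longrightarrow> a = s \<or> E s a \<Longrightarrow> b = t \<or> E t b \<Longrightarrow> a \<noteq> b \<and> \<not> E a b"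
  using gadgets_far_apart unfolding far_apart_def by blast

lemma inj_on_u: "inj_on u S"
  by (rule inj_onI) (use far_apartD gadget in blast)

lemma u_notin_gadgets:
  assumes "s \<in> S"
  shows "u s \<notin> S"
proof
  assume "u s \<in> S"
  moreover have "E s (u s)"
    using gadget[OF assms] by blast
  ultimately show False
    using far_apartD[OF assms, of "u s" "u s" "u s"] edge_irrefl by metis
qed

definition gadget_swap :: "'a set \<Rightarrow> 'a \<Rightarrow> 'a" where
  "gadget_swap T x = (if x \<in> T then u x else if x \<in> u ` T then the_inv_into T u x else x)"

lemma gadget_swap_centre: "t \<in> T \<Longrightarrow> gadget_swap T t = u t"
  by (simp add: gadget_swap_def)

lemma gadget_swap_u:
  assumes "T \<subseteq> S" "t \<in> T"
  shows "gadget_swap T (u t) = t"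
  using assms u_notin_gadgets inj_on_subset[OF inj_on_u assms(1)]
  by (auto simp: gadget_swap_def the_inv_into_f_f)

lemma gadget_swap_other: "x \<notin> T \<Longrightarrow> x \<notin> u ` T \<Longrightarrow> gadget_swap T x = x"
  by (simp add: gadget_swap_def)

lemma gadget_swap_swap: "T \<subseteq> S \<Longrightarrow> gadget_swap T (gadget_swap T x) = x"
  by (metis imageE gadget_swap_other gadget_swap_centre gadget_swap_u)

lemma gadget_swap_outside_V: "T \<subseteq> S \<Longrightarrow> x \<notin> V \<Longrightarrow> gadget_swap T x = x"
  using gadgets_in_V gadget edge_in_V by (intro gadget_swap_other) blast+

lemma gadget_swap_moved:
  assumes T: "T \<subseteq> S" and x: "x \<in> T \<union> u ` T"
  shows "E x (gadget_swap T x)" "E x y \<Longrightarrow> y \<noteq> gadget_swap T x \<Longrightarrow> gadget_swap T y = y"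
proof -
  obtain t where t: "t \<in> T"
    and partner: "x = t \<and> gadget_swap T x = u t \<or> x = u t \<and> gadget_swap T x = t"
    using x gadget_swap_centre gadget_swap_u[OF T] by blast
  have tS: "t \<in> S" using t T by blast
  have "E t (u t)" "E (u t) t"
    using gadget[OF tS] edge_sym by blast+
  then have tx: "x = t \<or> E t x"
    using partner by blast
  show "E x (gadget_swap T x)"
    using partner \<open>E t (u t)\<close> \<open>E (u t) t\<close> by auto
  assume xy: "E x y" and y: "y \<noteq> gadget_swap T x"
  have "y \<noteq> t" "y \<noteq> u t"
    using partner y xy edge_irrefl by auto
  have "y \<notin> T"
  proof
    assume "y \<in> T"
    then show False
      using far_apartD[of t y x y] T tS tx xy \<open>y \<noteq> t\<close> by blast
  qed
  moreover have "y \<notin> u ` T"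
  proof
    assume "y \<in> u ` T"
    then obtain t' where "t' \<in> T" "y = u t'" by blast
    then show False
      using far_apartD[of t t' x y] T tS tx xy gadget[of t'] \<open>y \<noteq> u t\<close> by blast
  qed
  ultimately show "gadget_swap T y = y"
    by (rule gadget_swap_other)
qed

lemma gadget_swap_fixes_witness:
  assumes T: "T \<subseteq> S" and s: "s \<in> S" and y: "y = w s \<or> (E (w s) y \<and> y \<noteq> s)"
  shows "gadget_swap T y = y"
proof (rule gadget_swap_other)
  have ws: "w s = s \<or> E s (w s)" and "w s \<noteq> s"
    using gadget[OF s] edge_irrefl by metis+
  show "y \<notin> T"
  proof
    assume "y \<in> T"
    moreover have "y \<noteq> s"
      using y \<open>w s \<noteq> s\<close> by auto
    ultimately show False
      using far_apartD[of s y "w s" y] T s ws y edge_irrefl by blast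
  qed
  show "y \<notin> u ` T"
  proof
    assume "y \<in> u ` T"
    then obtain t where t: "t \<in> T" "y = u t" by blast
    show False
    proof (cases "t = s")
      case True
      then show False using t y gadget[OF s] edge_sym by blast
    next
      case False
      have "t \<in> S" "E t y"
        using t T gadget by auto
      then show False
        using far_apartD[of s t "w s" y] s ws y False by blast
    qed
  qed
qed

lemma frozen_swap_moved_proper:
  assumes T: "T \<subseteq> S" and \<phi>: "\<phi> \<in> F" and x: "x \<in> T \<union> u ` T" and xy: "E x y"
  shows "\<phi> (gadget_swap T x) \<noteq> \<phi> (gadget_swap T y)"
proof (cases "y = gadget_swap T x")
  case True
  then have "gadget_swap T y = x"
    using gadget_swap_swap[OF T] by simp
  then show ?thesis
    using True L_colouring_proper[OF frozen_imp_L_colouring[OF \<phi>]] gadget_swap_moved(1)[OF T x]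
    by metis
next
  case False
  then have "gadget_swap T y = y"
    using gadget_swap_moved(2)[OF T x xy] by blast
  moreover have "gadget_swap T x \<in> N x" "y \<in> N x" "x \<in> V"
    using gadget_swap_moved(1)[OF T x] xy edge_in_V neighbours_iff by blast+
  ultimately show ?thesis
    using False frozen_colouring_inj_on_neighbours[OF \<phi>] by (metis inj_on_contraD)
qed

lemma frozen_swap_proper:
  assumes T: "T \<subseteq> S" and \<phi>: "\<phi> \<in> F" and xy: "E x y"
  shows "\<phi> (gadget_swap T x) \<noteq> \<phi> (gadget_swap T y)"
proof -
  consider "x \<in> T \<union> u ` T" | "y \<in> T \<union> u ` T" | "x \<notin> T \<union> u ` T" "y \<notin> T \<union> u ` T"
    by blast
  then show ?thesis
  proof cases
    case 1
    then show ?thesis using frozen_swap_moved_proper[OF T \<phi> _ xy] by blast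
  next
    case 2
    then show ?thesis using frozen_swap_moved_proper[OF T \<phi> _ edge_sym[OF xy]] by metis
  next
    case 3
    then show ?thesis
      using gadget_swap_other L_colouring_proper[OF frozen_imp_L_colouring[OF \<phi>] xy] by auto
  qed
qed

lemma frozen_swap_is_L_colouring:
  assumes T: "T \<subseteq> S" and \<phi>: "\<phi> \<in> F"
  shows "\<phi> \<circ> gadget_swap T \<in> C"
proof -
  have \<phi>C: "\<phi> \<in> C"
    using frozen_imp_L_colouring[OF \<phi>] .
  have "\<phi> (gadget_swap T x) \<in> L x" if "x \<in> V" for x
  proof (cases "x \<in> T \<union> u ` T")
    case True
    then show ?thesis
      using gadget_swap_moved(1)[OF T True] frozen_colouring_neighbour_in_list[OF \<phi>] by blast
  next
    case False
    then show ?thesis using gadget_swap_other \<phi>C that by (auto simp: L_colourings_def)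
  qed
  moreover have "\<phi> (gadget_swap T x) = undefined" if "x \<notin> V" for x
    using gadget_swap_outside_V[OF T that] \<phi>C that by (simp add: L_colourings_def)
  ultimately show ?thesis
    using frozen_swap_proper[OF T \<phi>] by (simp add: L_colourings_def)
qed

text \<open>Swapping the gadget at s moves the colour of s off the neighbourhood of w s, so w s is no
  longer frozen; the closed neighbourhood of the witness of an unswapped gadget is not touched.\<close>

lemma frozen_witness_after_swap_iff:
  assumes T: "T \<subseteq> S" and \<phi>: "\<phi> \<in> F" and s: "s \<in> S"
  shows "frozen_vertex V E L (\<phi> \<circ> gadget_swap T) (w s) \<longleftrightarrow> s \<notin> T"
proof -
  let ?\<sigma> = "gadget_swap T"
  have wV: "w s \<in> V" and sN: "s \<in> N (w s)"
    using gadget[OF s] edge_in_V edge_sym neighbours_iff by blast+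
  have w_fixed: "?\<sigma> (w s) = w s"
    using gadget_swap_fixes_witness[OF T s] by blast
  have nbr_fixed: "?\<sigma> y = y" if "y \<in> N (w s)" "y \<noteq> s" for y
    using gadget_swap_fixes_witness[OF T s] that neighbours_iff by blast
  show ?thesis
  proof
    assume frozen: "frozen_vertex V E L (\<phi> \<circ> ?\<sigma>) (w s)"
    show "s \<notin> T"
    proof
      assume "s \<in> T"
      have "\<phi> s \<in> L (w s) - {\<phi> (w s)}"
        using frozen_colouring_image_neighbours[OF \<phi> wV] sN by blast
      then obtain y where y: "y \<in> N (w s)" "\<phi> (?\<sigma> y) = \<phi> s"
        using frozen w_fixed unfolding frozen_vertex_def by auto
      show False
      proof (cases "y = s")
        case True
        then have "\<phi> (u s) = \<phi> s"
          using y(2) gadget_swap_centre[OF \<open>s \<in> T\<close>] by simp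
        then show False
          using L_colouring_proper[OF frozen_imp_L_colouring[OF \<phi>], of s "u s"] gadget[OF s]
          by auto
      next
        case False
        then show False
          using y nbr_fixed sN frozen_colouring_inj_on_neighbours[OF \<phi> wV] by (metis inj_on_contraD)
      qed
    qed
  next
    assume "s \<notin> T"
    then have "?\<sigma> s = s"
      using T u_notin_gadgets s by (intro gadget_swap_other) blast+
    then have "\<forall>y\<in>N (w s). ?\<sigma> y = y"
      using nbr_fixed by metis
    moreover have "frozen_vertex V E L \<phi> (w s)"
      using \<phi> wV by (simp add: frozen_L_colourings_def)
    ultimately show "frozen_vertex V E L (\<phi> \<circ> ?\<sigma>) (w s)"
      using w_fixed unfolding frozen_vertex_def by auto
  qed
qed

lemma card_frozen_mult_pow_le: "card F * 2 ^ card S \<le> card C"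
proof -
  let ?swap = "\<lambda>(\<phi>, T). \<phi> \<circ> gadget_swap T"
  have "inj_on ?swap (F \<times> Pow S)"
  proof (rule inj_onI, clarsimp)
    fix \<phi> T \<phi>' T'
    assume \<phi>: "\<phi> \<in> F" and T: "T \<subseteq> S" and \<phi>': "\<phi>' \<in> F" and T': "T' \<subseteq> S"
      and eq: "\<phi> \<circ> gadget_swap T = \<phi>' \<circ> gadget_swap T'"
    have "T = {s \<in> S. \<not> frozen_vertex V E L (\<phi> \<circ> gadget_swap T) (w s)}"
      using frozen_witness_after_swap_iff[OF T \<phi>] T by auto
    also have "\<dots> = T'"
      using frozen_witness_after_swap_iff[OF T' \<phi>'] T' eq by auto
    finally have "T = T'" .
    have "\<phi> x = \<phi>' x" for x
      using fun_cong[OF eq, of "gadget_swap T x"] gadget_swap_swap[OF T] \<open>T = T'\<close> by simp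
    then show "\<phi> = \<phi>' \<and> T = T'"
      using \<open>T = T'\<close> by blast
  qed
  moreover have "?swap ` (F \<times> Pow S) \<subseteq> C"
    using frozen_swap_is_L_colouring by auto
  ultimately have "card (F \<times> Pow S) \<le> card C"
    using card_inj_on_le finite_L_colourings by blast
  moreover have "finite S"
    using gadgets_in_V finite_V finite_subset by blast
  ultimately show ?thesis
    by (simp add: card_cartesian_product card_Pow)
qed

end

lemma ratio_le_powr_of_mult_pow_le:
  fixes f c k n :: nat and d :: real
  assumes "f * 2 ^ k \<le> c" and "real n \<le> real k * d" and "d > 0"
  shows "real f / real c \<le> 2 powr (- real n / d)"
proof (cases "c = 0")
  case True
  then show ?thesis by simp
next
  case False
  have "real f * 2 ^ k \<le> real c"
    using assms(1) by (metis of_nat_le_iff of_nat_mult of_nat_numeral of_nat_power)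
  then have "real f / real c \<le> 1 / 2 ^ k"
    using False by (simp add: field_simps)
  also have "\<dots> = 2 powr (- real k)"
    by (simp add: powr_minus powr_realpow divide_inverse)
  also have "\<dots> \<le> 2 powr (- real n / d)"
    using assms(2,3) by (simp add: field_simps)
  finally show ?thesis .
qed

theorem mainTheorem19:
  fixes V :: "'a set" and E :: "'a \<Rightarrow> 'a \<Rightarrow> bool" and L :: "'a \<Rightarrow> 'c set"
  assumes "graph V E"
    and "connected_graph V E"
    and "\<And>v. v \<in> V \<Longrightarrow> finite (L v) \<and> card (L v) \<ge> degree V E v + 1"
    and "\<not> complete_graph V E"
  shows "real (card (frozen_L_colourings V E L)) / real (card (L_colourings V E L))
           \<le> 2 powr (- real (card V) / real (max_degree V E) ^ 4)"
proof -
  interpret list_assignment V E L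
    using assms(1,3) by unfold_locales auto
  obtain S where SV: "S \<subseteq> V" and centres: "\<forall>s\<in>S. p3_centre E s"
    and far: "\<forall>s\<in>S. \<forall>t\<in>S. s \<noteq> t \<longrightarrow> far_apart E s t"
    and card_V: "card V \<le> card S * max_degree V E ^ 4"
    using exists_far_apart_p3_centres[OF assms(2,4)] by blast
  obtain u where u: "\<forall>s\<in>S. \<exists>b. E s (u s) \<and> E s b \<and> u s \<noteq> b \<and> \<not> E (u s) b"
    using bchoice[OF centres[unfolded p3_centre_def]] by blast
  obtain w where "\<forall>s\<in>S. E s (u s) \<and> E s (w s) \<and> u s \<noteq> w s \<and> \<not> E (u s) (w s)"
    using bchoice[OF u] by blast
  then interpret far_apart_gadgets V E L S u w
    using SV far by unfold_locales auto
  have "card V > 0"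
    using assms(2) finite_V by (simp add: connected_graph_def card_gt_0_iff)
  then have "max_degree V E > 0"
    using card_V by (cases "max_degree V E") simp_all
  then have "real (max_degree V E) ^ 4 > 0"
    by simp
  moreover have "real (card V) \<le> real (card S) * real (max_degree V E) ^ 4"
    using card_V by (metis of_nat_le_iff of_nat_mult of_nat_power)
  ultimately show ?thesis
    using ratio_le_powr_of_mult_pow_le[OF card_frozen_mult_pow_le] by blast
qed

end
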